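(* Let $\mathcal{P}\subset\mathbb{R}^d$ be a finite set of item vectors, $\bm{q}\in\mathbb{R}^d\setminus\{\bm{0}\}$, $k>1$ an integer, $\lambda\in[0,1]$, $\mu>0$, and assume $\langle\bm{x},\bm{y}\rangle\ge0$ for all $\bm{x},\bm{y}\in\mathcal{P}\cup\{\bm{q}\}$. Let $\mathcal{N}\subseteq\mathcal{P}$ be nonempty with center $\bm{c}=\frac{1}{|\mathcal{N}|}\sum_{\bm{p}\in\mathcal{N}}\bm{p}\neq\bm{0}$, let $\theta\in[0,\pi]$ be the angle between $\bm{c}$ and $\bm{q}$, and for each nonzero $\bm{p}\in\mathcal{N}$ let $\varphi_{\bm{p}}\in[0,\pi]$ be the angle between $\bm{p}$ and $\bm{c}$. Then for every such $\bm{p}$, every $\mathcal{S}\subseteq\mathcal{P}$, and $\Delta_f$ equal to either $\Delta_{f_{avg}}$ or $\Delta_{f_{max}}$, $$\Delta_f(\bm{p},\mathcal{S})\le\tfrac{\lambda}{k}\,\|\bm{p}\|\,\|\bm{q}\|\cos(|\theta-\varphi_{\bm{p}}|).$$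
   Context: $\Delta_{f_{avg}}(\bm{p},\mathcal{S}) = \frac{\lambda}{k}\langle\bm{p},\bm{q}\rangle - \frac{2\mu(1-\lambda)}{k(k-1)}\sum_{\bm{p}'\in\mathcal{S}}\langle\bm{p},\bm{p}'\rangle$ and $\Delta_{f_{max}}(\bm{p},\mathcal{S}) = \frac{\lambda}{k}\langle\bm{p},\bm{q}\rangle - \mu(1-\lambda)\big(\max_{\bm{p}_x\ne\bm{p}_y\in\mathcal{S}\cup\{\bm{p}\}}\langle\bm{p}_x,\bm{p}_y\rangle - \max_{\bm{p}_x\ne\bm{p}_y\in\mathcal{S}}\langle\bm{p}_x,\bm{p}_y\rangle\big)$, where a maximum over an empty collection of pairs is taken to be $0$. The set $\mathcal{N}$ plays the role of a leaf node of a ball-cone tree (BC-Tree) storing, for each item, its norm and its angle to the node center. *)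

theory Defs
  imports "HOL-Analysis.Analysis"
begin

definition vec_angle :: "'a::real_inner \<Rightarrow> 'a \<Rightarrow> real" where
  "vec_angle x y = arccos ((x \<bullet> y) / (norm x * norm y))"

definition max_pair_ip :: "'a::real_inner set \<Rightarrow> real" where
  "max_pair_ip A = (if \<exists>x\<in>A. \<exists>y\<in>A. x \<noteq> y
     then Max {x \<bullet> y | x y. x \<in> A \<and> y \<in> A \<and> x \<noteq> y} else 0)"

definition delta_avg :: "real \<Rightarrow> real \<Rightarrow> nat \<Rightarrow> 'a::real_inner \<Rightarrow> 'a \<Rightarrow> 'a set \<Rightarrow> real" where
  "delta_avg lam mu k q p S =
     lam / real k * (p \<bullet> q)
     - 2 * mu * (1 - lam) / (real k * (real k - 1)) * (\<Sum>p'\<in>S. p \<bullet> p')"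

definition delta_max :: "real \<Rightarrow> real \<Rightarrow> nat \<Rightarrow> 'a::real_inner \<Rightarrow> 'a \<Rightarrow> 'a set \<Rightarrow> real" where
  "delta_max lam mu k q p S =
     lam / real k * (p \<bullet> q)
     - mu * (1 - lam) * (max_pair_ip (insert p S) - max_pair_ip S)"

end

theory Submission
  imports Defs
begin

text \<open>Under nonnegative inner products both diversity penalties are nonnegative (for the
  max-form because adding an item can only increase the largest pairwise inner product), so
  each marginal gain is at most the relevance term \<open>\<lambda>/k \<langle>p,q\<rangle>\<close>. Writing \<open>w\<close> for the unit
  vector along the center \<open>c\<close> and splitting \<open>p\<close> and \<open>q\<close> into their components along and
  orthogonal to \<open>w\<close>, Cauchy-Schwarz on the orthogonal parts gives
  \<open>\<langle>p,q\<rangle> \<le> \<parallel>p\<parallel>\<parallel>q\<parallel>(cos \<theta> cos \<phi> + sin \<theta> sin \<phi>) = \<parallel>p\<parallel>\<parallel>q\<parallel> cos (\<theta> - \<phi>)\<close>,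
  a form of the triangle inequality for angles.\<close>

lemma vec_angle_commute: "vec_angle x y = vec_angle y x"
  by (simp add: vec_angle_def inner_commute mult.commute)

lemma vec_angle_scaleR_right:
  assumes "0 < c"
  shows "vec_angle x (c *\<^sub>R y) = vec_angle x y"
  using assms by (simp add: vec_angle_def)

lemma abs_inner_div_norms_le_1: "\<bar>(x \<bullet> y) / (norm x * norm y)\<bar> \<le> 1"
  using Cauchy_Schwarz_ineq2[of x y] by (auto simp: abs_div divide_le_eq_1)

lemma cos_vec_angle: "cos (vec_angle x y) = (x \<bullet> y) / (norm x * norm y)"
  unfolding vec_angle_def by (rule cos_arccos_abs[OF abs_inner_div_norms_le_1])

lemma sin_vec_angle: "sin (vec_angle x y) = sqrt (1 - ((x \<bullet> y) / (norm x * norm y))\<^sup>2)"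
  unfolding vec_angle_def by (rule sin_arccos_abs[OF abs_inner_div_norms_le_1])

lemma norm_mult_cos_vec_angle_unit:
  assumes "norm u = 1"
  shows "norm x * cos (vec_angle x u) = x \<bullet> u"
  using assms by (cases "x = 0") (simp_all add: cos_vec_angle)

lemma power2_norm_reject_unit:
  assumes "norm u = 1"
  shows "(norm (x - (x \<bullet> u) *\<^sub>R u))\<^sup>2 = (norm x)\<^sup>2 - (x \<bullet> u)\<^sup>2"
  using assms unfolding power2_norm_eq_inner norm_eq_1
  by (simp add: inner_diff_left inner_diff_right inner_commute power2_eq_square algebra_simps)

lemma norm_mult_sin_vec_angle_unit:
  assumes "norm u = 1"
  shows "norm x * sin (vec_angle x u) = norm (x - (x \<bullet> u) *\<^sub>R u)"
proof (cases "x = 0")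
  case False
  have "norm x * sin (vec_angle x u) = sqrt ((norm x)\<^sup>2 * (1 - ((x \<bullet> u) / norm x)\<^sup>2))"
    using assms by (simp add: sin_vec_angle real_sqrt_mult)
  also have "(norm x)\<^sup>2 * (1 - ((x \<bullet> u) / norm x)\<^sup>2) = (norm (x - (x \<bullet> u) *\<^sub>R u))\<^sup>2"
    using False assms by (simp add: power2_norm_reject_unit power_divide right_diff_distrib)
  finally show ?thesis by simp
qed simp

lemma inner_split_unit:
  assumes "norm u = 1"
  shows "x \<bullet> y = (x \<bullet> u) * (y \<bullet> u) + (x - (x \<bullet> u) *\<^sub>R u) \<bullet> (y - (y \<bullet> u) *\<^sub>R u)"
  using assms unfolding norm_eq_1
  by (simp add: inner_diff_left inner_diff_right inner_commute algebra_simps)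

lemma inner_le_norm_mult_cos_angle_diff:
  fixes x y z :: "'a::real_inner"
  assumes "z \<noteq> 0"
  shows "x \<bullet> y \<le> norm x * norm y * cos (vec_angle z y - vec_angle x z)"
proof -
  define w where "w = (1 / norm z) *\<^sub>R z"
  have w: "norm w = 1"
    using assms by (simp add: w_def)
  have angle_x: "vec_angle x z = vec_angle x w" and angle_y: "vec_angle z y = vec_angle y w"
    using assms by (simp_all add: w_def vec_angle_scaleR_right vec_angle_commute[of z])
  let ?rx = "x - (x \<bullet> w) *\<^sub>R w" and ?ry = "y - (y \<bullet> w) *\<^sub>R w"
  have "x \<bullet> y = (x \<bullet> w) * (y \<bullet> w) + ?rx \<bullet> ?ry"
    using w by (rule inner_split_unit)
  also have "\<dots> \<le> (x \<bullet> w) * (y \<bullet> w) + norm ?rx * norm ?ry"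
    using norm_cauchy_schwarz by simp
  also have "\<dots> = (norm x * cos (vec_angle x w)) * (norm y * cos (vec_angle y w))
      + (norm x * sin (vec_angle x w)) * (norm y * sin (vec_angle y w))"
    using w by (simp only: norm_mult_cos_vec_angle_unit norm_mult_sin_vec_angle_unit)
  also have "\<dots> = norm x * norm y * cos (vec_angle y w - vec_angle x w)"
    by (simp add: cos_diff algebra_simps)
  finally show ?thesis
    by (simp only: angle_x angle_y)
qed

lemma finite_pair_ips:
  assumes "finite A"
  shows "finite {x \<bullet> y | x y. x \<in> A \<and> y \<in> A \<and> x \<noteq> y}"
proof -
  have "{x \<bullet> y | x y. x \<in> A \<and> y \<in> A \<and> x \<noteq> y} \<subseteq> (\<lambda>(x, y). x \<bullet> y) ` (A \<times> A)"
    by auto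
  then show ?thesis
    by (rule finite_subset) (use assms in simp)
qed

lemma max_pair_ip_nonneg:
  assumes "finite A" and "\<forall>x\<in>A. \<forall>y\<in>A. 0 \<le> x \<bullet> y"
  shows "0 \<le> max_pair_ip A"
proof (cases "\<exists>x\<in>A. \<exists>y\<in>A. x \<noteq> y")
  case True
  then obtain x y where xy: "x \<in> A" "y \<in> A" "x \<noteq> y"
    by blast
  then have "x \<bullet> y \<in> {x \<bullet> y | x y. x \<in> A \<and> y \<in> A \<and> x \<noteq> y}"
    by blast
  then have "x \<bullet> y \<le> Max {x \<bullet> y | x y. x \<in> A \<and> y \<in> A \<and> x \<noteq> y}"
    using finite_pair_ips[OF assms(1)] by simp
  moreover have "0 \<le> x \<bullet> y"
    using assms(2) xy by blast
  ultimately show ?thesis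
    using True unfolding max_pair_ip_def by simp
qed (simp add: max_pair_ip_def)

lemma max_pair_ip_mono:
  assumes "finite B" and "A \<subseteq> B" and "\<forall>x\<in>B. \<forall>y\<in>B. 0 \<le> x \<bullet> y"
  shows "max_pair_ip A \<le> max_pair_ip B"
proof (cases "\<exists>x\<in>A. \<exists>y\<in>A. x \<noteq> y")
  case True
  have sub: "{x \<bullet> y | x y. x \<in> A \<and> y \<in> A \<and> x \<noteq> y}
      \<subseteq> {x \<bullet> y | x y. x \<in> B \<and> y \<in> B \<and> x \<noteq> y}"
    using assms(2) by blast
  have ne: "{x \<bullet> y | x y. x \<in> A \<and> y \<in> A \<and> x \<noteq> y} \<noteq> {}"
    using True by blast
  have "\<exists>x\<in>B. \<exists>y\<in>B. x \<noteq> y"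
    using True assms(2) by blast
  then show ?thesis
    using True Max_mono[OF sub ne finite_pair_ips[OF assms(1)]]
    unfolding max_pair_ip_def by simp
next
  case False
  then show ?thesis
    using max_pair_ip_nonneg[OF assms(1,3)] unfolding max_pair_ip_def by simp
qed

lemma delta_avg_le_relevance:
  assumes "lam \<le> 1" and "0 \<le> mu" and "\<forall>p'\<in>S. 0 \<le> p \<bullet> p'"
  shows "delta_avg lam mu k q p S \<le> lam / real k * (p \<bullet> q)"
proof -
  have "0 \<le> real k * (real k - 1)"
    by (cases k) simp_all
  moreover have "0 \<le> 2 * mu * (1 - lam)" and "0 \<le> (\<Sum>p'\<in>S. p \<bullet> p')"
    using assms by (simp_all add: sum_nonneg)
  ultimately have "0 \<le> 2 * mu * (1 - lam) / (real k * (real k - 1)) * (\<Sum>p'\<in>S. p \<bullet> p')"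
    by (simp add: divide_nonneg_nonneg)
  then show ?thesis
    unfolding delta_avg_def by simp
qed

lemma delta_max_le_relevance:
  assumes "lam \<le> 1" and "0 \<le> mu" and "finite S"
    and "\<forall>x\<in>insert p S. \<forall>y\<in>insert p S. 0 \<le> x \<bullet> y"
  shows "delta_max lam mu k q p S \<le> lam / real k * (p \<bullet> q)"
proof -
  have "max_pair_ip S \<le> max_pair_ip (insert p S)"
    using assms(3,4) by (intro max_pair_ip_mono) auto
  then have "0 \<le> mu * (1 - lam) * (max_pair_ip (insert p S) - max_pair_ip S)"
    using assms(1,2) by simp
  then show ?thesis
    unfolding delta_max_def by simp
qed

theorem theorem5:
  fixes P N S :: "(real ^ 'd) set" and q p :: "real ^ 'd"
    and k :: nat and lam mu :: real
    and \<Delta> :: "real \<Rightarrow> real \<Rightarrow> nat \<Rightarrow> real ^ 'd \<Rightarrow> real ^ 'd \<Rightarrow> (real ^ 'd) set \<Rightarrow> real"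
  assumes "finite P" and "q \<noteq> 0" and "k > 1"
    and "0 \<le> lam" and "lam \<le> 1" and "mu > 0"
    and "\<forall>x\<in>insert q P. \<forall>y\<in>insert q P. x \<bullet> y \<ge> 0"
    and "N \<subseteq> P" and "N \<noteq> {}"
    and "(1 / real (card N)) *\<^sub>R (\<Sum>p'\<in>N. p') \<noteq> 0"
    and "p \<in> N" and "p \<noteq> 0"
    and "S \<subseteq> P"
    and "\<Delta> = delta_avg \<or> \<Delta> = delta_max"
  shows "let c = (1 / real (card N)) *\<^sub>R (\<Sum>p'\<in>N. p');
             \<theta> = vec_angle c q;
             \<phi> = vec_angle p c
         in \<Delta> lam mu k q p S \<le> lam / real k * norm p * norm q * cos \<bar>\<theta> - \<phi>\<bar>"
proof -
  define c where "c = (1 / real (card N)) *\<^sub>R (\<Sum>p'\<in>N. p')"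
  have nonneg: "\<forall>x\<in>insert p S. \<forall>y\<in>insert p S. 0 \<le> x \<bullet> y"
    using assms(7,8,11,13) by blast
  have "\<Delta> lam mu k q p S \<le> lam / real k * (p \<bullet> q)"
    using assms(14)
  proof
    assume "\<Delta> = delta_avg"
    show ?thesis
      unfolding \<open>\<Delta> = delta_avg\<close>
      by (rule delta_avg_le_relevance) (use assms(5,6) nonneg in auto)
  next
    assume "\<Delta> = delta_max"
    show ?thesis
      unfolding \<open>\<Delta> = delta_max\<close>
      by (rule delta_max_le_relevance) (use assms(5,6) nonneg finite_subset[OF assms(13,1)] in auto)
  qed
  also have "\<dots> \<le> lam / real k * (norm p * norm q * cos (vec_angle c q - vec_angle p c))"
    by (rule mult_left_mono[OF inner_le_norm_mult_cos_angle_diff]) (use assms(4,10) c_def in auto)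
  finally show ?thesis
    unfolding Let_def c_def[symmetric] by (simp only: cos_abs_real mult.assoc)
qed

end
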